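(* Let $n\ge1$, $G\le S_n$ and $\chi$ a character of $G$. Then $d_\chi^G(AB)=d_\chi^G(A)\,d_\chi^G(B)$ for all $A,B\in\mathbb S_n(\mathbb C)$ if and only if $d_\chi^G=\det$ on $M_n(\mathbb C)$.
   Context: A character of $G\le S_n$ is a function $g\mapsto\operatorname{tr}(\rho(g))$ for some homomorphism $\rho:G\to GL_m(\mathbb C)$, $m\ge1$. $\mathbb S_n(\mathbb C)$ is the set of complex symmetric $n\times n$ matrices. $d_\chi^G(A)=\sum_{\sigma\in G}\chi(\sigma)\prod_{i=1}^n A_{i\,\sigma(i)}$ for $A\in M_n(\mathbb C)$. *)

theory Defs
  imports "Jordan_Normal_Form.Determinant"
begin

definition perm_subgroup :: "nat \<Rightarrow> (nat \<Rightarrow> nat) set \<Rightarrow> bool" where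
  "perm_subgroup n G \<longleftrightarrow>
     G \<subseteq> {p. p permutes {0..<n}} \<and> id \<in> G \<and>
     (\<forall>p\<in>G. \<forall>q\<in>G. p \<circ> q \<in> G) \<and> (\<forall>p\<in>G. inv_into UNIV p \<in> G)"

definition mat_trace :: "complex mat \<Rightarrow> complex" where
  "mat_trace A = (\<Sum>i<dim_row A. A $$ (i, i))"

definition is_character :: "nat \<Rightarrow> (nat \<Rightarrow> nat) set \<Rightarrow> ((nat \<Rightarrow> nat) \<Rightarrow> complex) \<Rightarrow> bool" where
  "is_character n G \<chi> \<longleftrightarrow>
     (\<exists>m::nat. m \<ge> 1 \<and> (\<exists>\<rho> :: (nat \<Rightarrow> nat) \<Rightarrow> complex mat.
        (\<forall>g\<in>G. \<rho> g \<in> carrier_mat m m \<and> invertible_mat (\<rho> g)) \<and>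
        (\<forall>g\<in>G. \<forall>h\<in>G. \<rho> (g \<circ> h) = \<rho> g * \<rho> h) \<and>
        (\<forall>g\<in>G. \<chi> g = mat_trace (\<rho> g))))"

definition gen_mat_fun :: "nat \<Rightarrow> (nat \<Rightarrow> nat) set \<Rightarrow> ((nat \<Rightarrow> nat) \<Rightarrow> complex) \<Rightarrow> complex mat \<Rightarrow> complex" where
  "gen_mat_fun n G \<chi> A = (\<Sum>\<sigma>\<in>G. \<chi> \<sigma> * (\<Prod>i\<in>{0..<n}. A $$ (i, \<sigma> i)))"

definition symmetric_mat :: "nat \<Rightarrow> complex mat \<Rightarrow> bool" where
  "symmetric_mat n A \<longleftrightarrow> A \<in> carrier_mat n n \<and> transpose_mat A = A"

end

theory Submission
  imports Defs
begin

text \<open>If \<open>d\<^sub>\<chi>\<^sup>G\<close> is multiplicative on symmetric matrices, then \<open>d(I) = d(I)\<^sup>2\<close> forces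
  \<open>\<chi>(id) = 1\<close>, so \<chi> is the character of a one-dimensional representation and hence
  multiplicative. Testing multiplicativity on the symmetric matrices that agree with the identity
  outside a \<open>2 \<times> 2\<close> block \<open>[[a, b], [b, a]]\<close> in rows and columns \<open>i, j\<close>, on which
  \<open>d = a\<^sup>2 + \<chi>(i j) b\<^sup>2\<close> (with \<open>\<chi>(i j)\<close> read as 0 if \<open>(i j) \<notin> G\<close>), shows that every
  transposition lies in G and has character \<open>-1\<close>. Hence \<open>G = S\<^sub>n\<close>, \<open>\<chi> = sign\<close> and
  \<open>d\<^sub>\<chi>\<^sup>G = det\<close>; the converse is multiplicativity of the determinant.\<close>

lemma perm_subgroup_finite: "perm_subgroup n G \<Longrightarrow> finite G"
  unfolding perm_subgroup_def
  using finite_subset[OF _ finite_permutations[OF finite_atLeastLessThan[of 0 n]]] by blast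

lemma invertible_idempotent_mat_eq_one:
  fixes M :: "'a :: semiring_1 mat"
  assumes M: "M \<in> carrier_mat m m" and "invertible_mat M" and idem: "M * M = M"
  shows "M = 1\<^sub>m m"
proof -
  obtain B where "inverts_mat M B" and BM: "inverts_mat B M"
    using \<open>invertible_mat M\<close> unfolding invertible_mat_def by blast
  then have B: "B \<in> carrier_mat m m"
    using M unfolding inverts_mat_def by (metis carrier_matD carrier_matI index_mult_mat(3) index_one_mat(3))
  have "M = (B * M) * M" using BM B M unfolding inverts_mat_def by simp
  also have "\<dots> = B * (M * M)" using B M by simp
  also have "\<dots> = 1\<^sub>m m" using idem BM B unfolding inverts_mat_def by simp
  finally show ?thesis .
qed

text \<open>\<open>\<chi>(id)\<close> is the degree of the representation, so idempotency forces degree 1.\<close>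

lemma character_linear_if_id_idempotent:
  assumes G: "perm_subgroup n G" and "is_character n G \<chi>" and idem: "\<chi> id * \<chi> id = \<chi> id"
  shows character_id_eq_one: "\<chi> id = 1"
    and character_mult: "g \<in> G \<Longrightarrow> h \<in> G \<Longrightarrow> \<chi> (g \<circ> h) = \<chi> g * \<chi> h"
proof -
  have idG: "id \<in> G" and compG: "\<And>g h. g \<in> G \<Longrightarrow> h \<in> G \<Longrightarrow> g \<circ> h \<in> G"
    using G unfolding perm_subgroup_def by auto
  obtain m \<rho> where "m \<ge> 1"
    and \<rho>_carrier: "\<And>g. g \<in> G \<Longrightarrow> \<rho> g \<in> carrier_mat m m \<and> invertible_mat (\<rho> g)"
    and \<rho>_hom: "\<And>g h. g \<in> G \<Longrightarrow> h \<in> G \<Longrightarrow> \<rho> (g \<circ> h) = \<rho> g * \<rho> h"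
    and \<chi>_trace: "\<And>g. g \<in> G \<Longrightarrow> \<chi> g = mat_trace (\<rho> g)"
    using \<open>is_character n G \<chi>\<close> unfolding is_character_def by metis
  have "\<rho> id = 1\<^sub>m m"
    using invertible_idempotent_mat_eq_one \<rho>_carrier[OF idG] \<rho>_hom[OF idG idG] by (metis comp_id)
  then have "\<chi> id = of_nat m" using \<chi>_trace[OF idG] unfolding mat_trace_def by simp
  with idem have "of_nat (m * m) = (of_nat m :: complex)" by simp
  then have "m * m = m" by (simp only: of_nat_eq_iff)
  with \<open>m \<ge> 1\<close> have "m = 1" by simp
  with \<open>\<chi> id = of_nat m\<close> show "\<chi> id = 1" by simp
  show "\<chi> (g \<circ> h) = \<chi> g * \<chi> h" if g: "g \<in> G" and h: "h \<in> G" for g h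
  proof -
    have "\<rho> g \<in> carrier_mat 1 1" "\<rho> h \<in> carrier_mat 1 1" using \<rho>_carrier g h \<open>m = 1\<close> by auto
    then show ?thesis
      using \<chi>_trace[OF compG[OF g h]] \<rho>_hom[OF g h] \<chi>_trace[OF g] \<chi>_trace[OF h]
      unfolding mat_trace_def by (simp add: scalar_prod_def)
  qed
qed

lemma gen_mat_fun_eq_sum_support:
  assumes "finite G" and vanish: "\<And>\<sigma>. \<sigma> \<in> G \<Longrightarrow> \<sigma> \<notin> S \<Longrightarrow> \<exists>k<n. A $$ (k, \<sigma> k) = 0"
  shows "gen_mat_fun n G \<chi> A = (\<Sum>\<sigma>\<in>G \<inter> S. \<chi> \<sigma> * (\<Prod>i\<in>{0..<n}. A $$ (i, \<sigma> i)))"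
  unfolding gen_mat_fun_def
proof (rule sum.mono_neutral_right)
  show "\<forall>\<sigma>\<in>G - G \<inter> S. \<chi> \<sigma> * (\<Prod>i\<in>{0..<n}. A $$ (i, \<sigma> i)) = 0"
  proof
    fix \<sigma> assume "\<sigma> \<in> G - G \<inter> S"
    then obtain k where "k < n" "A $$ (k, \<sigma> k) = 0" using vanish by blast
    then have "(\<Prod>i\<in>{0..<n}. A $$ (i, \<sigma> i)) = 0" by (intro prod_zero) auto
    then show "\<chi> \<sigma> * (\<Prod>i\<in>{0..<n}. A $$ (i, \<sigma> i)) = 0" by simp
  qed
qed (use \<open>finite G\<close> in auto)

lemma gen_mat_fun_one:
  assumes G: "perm_subgroup n G"
  shows "gen_mat_fun n G \<chi> (1\<^sub>m n) = \<chi> id"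
proof -
  have "\<exists>k<n. (1\<^sub>m n :: complex mat) $$ (k, \<sigma> k) = 0" if "\<sigma> \<in> G" "\<sigma> \<notin> {id}" for \<sigma>
  proof -
    have \<sigma>: "\<sigma> permutes {0..<n}" using that G unfolding perm_subgroup_def by auto
    obtain k where "\<sigma> k \<noteq> k" using \<open>\<sigma> \<notin> {id}\<close> by (auto simp: fun_eq_iff)
    then have "k < n" "\<sigma> k < n" using \<sigma> by (auto simp: permutes_def permutes_in_image)
    with \<open>\<sigma> k \<noteq> k\<close> show ?thesis by auto
  qed
  with perm_subgroup_finite[OF G] have "gen_mat_fun n G \<chi> (1\<^sub>m n)
      = (\<Sum>\<sigma>\<in>G \<inter> {id}. \<chi> \<sigma> * (\<Prod>i\<in>{0..<n}. (1\<^sub>m n :: complex mat) $$ (i, \<sigma> i)))"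
    by (rule gen_mat_fun_eq_sum_support)
  also have "G \<inter> {id} = {id}" using G unfolding perm_subgroup_def by auto
  finally show ?thesis by (simp add: id_def)
qed

definition swap_block_mat :: "nat \<Rightarrow> nat \<Rightarrow> nat \<Rightarrow> 'a \<Rightarrow> 'a \<Rightarrow> 'a :: zero_neq_one mat" where
  "swap_block_mat n i j a b = mat n n (\<lambda>(k, l).
     if k = l then (if k = i \<or> k = j then a else 1)
     else if (k = i \<and> l = j) \<or> (k = j \<and> l = i) then b else 0)"

lemma dim_row_swap_block_mat [simp]: "dim_row (swap_block_mat n i j a b) = n"
  and dim_col_swap_block_mat [simp]: "dim_col (swap_block_mat n i j a b) = n"
  unfolding swap_block_mat_def by simp_all

lemma index_swap_block_mat:
  "k < n \<Longrightarrow> l < n \<Longrightarrow> swap_block_mat n i j a b $$ (k, l) =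
     (if k = l then (if k = i \<or> k = j then a else 1)
      else if (k = i \<and> l = j) \<or> (k = j \<and> l = i) then b else 0)"
  unfolding swap_block_mat_def by simp

lemma swap_block_mat_symmetric: "symmetric_mat n (swap_block_mat n i j a b)"
  unfolding symmetric_mat_def
  by (auto simp: index_swap_block_mat)

lemma swap_block_mat_mult:
  fixes a b c e :: "'a :: semiring_1"
  assumes ij: "i < n" "j < n" "i \<noteq> j"
  shows "swap_block_mat n i j a b * swap_block_mat n i j c e
       = swap_block_mat n i j (a * c + b * e) (a * e + b * c)"
proof (rule eq_matI)
  fix k l assume "k < dim_row (swap_block_mat n i j (a * c + b * e) (a * e + b * c))"
    and "l < dim_col (swap_block_mat n i j (a * c + b * e) (a * e + b * c))"
  then have k: "k < n" and l: "l < n" by simp_all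
  let ?M = "swap_block_mat n i j a b" and ?N = "swap_block_mat n i j c e"
  have entry: "(?M * ?N) $$ (k, l) = (\<Sum>r\<in>{0..<n}. ?M $$ (k, r) * ?N $$ (r, l))"
    using k l by (simp add: scalar_prod_def)
  show "(?M * ?N) $$ (k, l) = swap_block_mat n i j (a * c + b * e) (a * e + b * c) $$ (k, l)"
  proof (cases "k = i \<or> k = j")
    case True
    have "(\<Sum>r\<in>{0..<n}. ?M $$ (k, r) * ?N $$ (r, l)) = (\<Sum>r\<in>{i, j}. ?M $$ (k, r) * ?N $$ (r, l))"
      using ij k True by (intro sum.mono_neutral_right) (auto simp: index_swap_block_mat)
    then show ?thesis using entry True ij k l by (auto simp: index_swap_block_mat add.commute)
  next
    case False
    have "(\<Sum>r\<in>{0..<n}. ?M $$ (k, r) * ?N $$ (r, l)) = (\<Sum>r\<in>{k}. ?M $$ (k, r) * ?N $$ (r, l))"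
      using ij k False by (intro sum.mono_neutral_right) (auto simp: index_swap_block_mat)
    then show ?thesis using entry False ij k l by (auto simp: index_swap_block_mat)
  qed
qed simp_all

lemma prod_swap_block_mat_diagonal:
  assumes ij: "i < n" "j < n" "i \<noteq> j" and \<sigma>: "\<sigma> permutes {i, j}"
  shows "(\<Prod>k\<in>{0..<n}. swap_block_mat n i j a b $$ (k, \<sigma> k))
       = swap_block_mat n i j a b $$ (i, \<sigma> i) * swap_block_mat n i j a b $$ (j, \<sigma> j)"
proof -
  have "(\<Prod>k\<in>{0..<n}. swap_block_mat n i j a b $$ (k, \<sigma> k))
      = (\<Prod>k\<in>{i, j}. swap_block_mat n i j a b $$ (k, \<sigma> k))"
    using ij \<sigma> by (intro prod.mono_neutral_right) (auto simp: index_swap_block_mat permutes_not_in)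
  then show ?thesis using ij by simp
qed

text \<open>A permutation picking only nonzero entries of \<open>swap_block_mat\<close> moves nothing outside
  \<open>{i, j}\<close>, so all other terms of \<open>d\<^sub>\<chi>\<^sup>G\<close> vanish.\<close>

lemma gen_mat_fun_swap_block_mat:
  assumes G: "perm_subgroup n G" and ij: "i < n" "j < n" "i \<noteq> j"
  shows "gen_mat_fun n G \<chi> (swap_block_mat n i j a b) = \<chi> id * a\<^sup>2 +
     (if Transposition.transpose i j \<in> G then \<chi> (Transposition.transpose i j) * b\<^sup>2 else 0)"
proof -
  let ?t = "Transposition.transpose i j" and ?M = "swap_block_mat n i j a b"
  have "\<exists>k<n. ?M $$ (k, \<sigma> k) = 0" if "\<sigma> \<in> G" "\<sigma> \<notin> {id, ?t}" for \<sigma>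
  proof (rule ccontr)
    assume nonzero: "\<not> (\<exists>k<n. ?M $$ (k, \<sigma> k) = 0)"
    have \<sigma>: "\<sigma> permutes {0..<n}" using that G unfolding perm_subgroup_def by auto
    have "\<sigma> k = k" if k: "k \<in> {0..<n} - {i, j}" for k
    proof -
      have "k < n" "\<sigma> k < n" using k permutes_in_image[OF \<sigma>] by auto
      moreover have "?M $$ (k, \<sigma> k) \<noteq> 0" using nonzero \<open>k < n\<close> by auto
      ultimately show ?thesis using k by (auto simp: index_swap_block_mat split: if_splits)
    qed
    then have "\<sigma> permutes {i, j}" by (rule permutes_superset[OF \<sigma>])
    with \<open>\<sigma> \<notin> {id, ?t}\<close> show False by (simp add: permutes_doubleton_iff)
  qed
  then have "gen_mat_fun n G \<chi> ?M = (\<Sum>\<sigma>\<in>G \<inter> {id, ?t}. \<chi> \<sigma> * (\<Prod>k\<in>{0..<n}. ?M $$ (k, \<sigma> k)))"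
    by (rule gen_mat_fun_eq_sum_support[OF perm_subgroup_finite[OF G]])
  also have "\<dots> = \<chi> id * (\<Prod>k\<in>{0..<n}. ?M $$ (k, k)) +
      (if ?t \<in> G then \<chi> ?t * (\<Prod>k\<in>{0..<n}. ?M $$ (k, ?t k)) else 0)"
  proof -
    have "?t \<noteq> id" using ij by (metis id_apply transpose_apply_first)
    moreover have "id \<in> G" using G unfolding perm_subgroup_def by auto
    ultimately show ?thesis
      by (cases "?t \<in> G") (simp_all add: Int_insert_right)
  qed
  also have "\<dots> = \<chi> id * a\<^sup>2 + (if ?t \<in> G then \<chi> ?t * b\<^sup>2 else 0)"
  proof -
    have "(\<Prod>k\<in>{0..<n}. ?M $$ (k, id k)) = a\<^sup>2"
      using prod_swap_block_mat_diagonal[OF ij permutes_id, of a b] ij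
      by (simp add: index_swap_block_mat power2_eq_square)
    moreover have "(\<Prod>k\<in>{0..<n}. ?M $$ (k, ?t k)) = b\<^sup>2"
      using prod_swap_block_mat_diagonal[OF ij permutes_swap_id, of i j a b] ij
      by (simp add: index_swap_block_mat power2_eq_square)
    ultimately show ?thesis by simp
  qed
  finally show ?thesis .
qed

text \<open>Squaring \<open>[[0, 1], [1, 0]]\<close> and \<open>[[1, 1], [1, 1]]\<close> gives \<open>1 = t\<^sup>2\<close> and
  \<open>4 + 4t = (1 + t)\<^sup>2\<close> for \<open>t = \<chi>(i j)\<close> (or 0), whence \<open>t = -1\<close>.\<close>

lemma transposition_in_group_if_mult_on_symmetric:
  assumes G: "perm_subgroup n G" and \<chi>_id: "\<chi> id = 1"
    and mult: "\<forall>A B. symmetric_mat n A \<longrightarrow> symmetric_mat n B \<longrightarrow>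
        gen_mat_fun n G \<chi> (A * B) = gen_mat_fun n G \<chi> A * gen_mat_fun n G \<chi> B"
    and ij: "i < n" "j < n" "i \<noteq> j"
  shows "Transposition.transpose i j \<in> G \<and> \<chi> (Transposition.transpose i j) = -1"
proof -
  let ?t = "Transposition.transpose i j"
  define t where "t = (if ?t \<in> G then \<chi> ?t else 0)"
  let ?d = "\<lambda>a b. gen_mat_fun n G \<chi> (swap_block_mat n i j a b)"
  have d: "?d a b = a\<^sup>2 + t * b\<^sup>2" for a b
    using gen_mat_fun_swap_block_mat[OF G ij] \<chi>_id unfolding t_def by auto
  have square: "?d (a * a + b * b) (a * b + b * a) = ?d a b * ?d a b" for a b
    using mult swap_block_mat_symmetric swap_block_mat_mult[OF ij] by metis
  have "1 = t * t" using square[of 0 1] by (simp add: d power2_eq_square)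
  moreover have "4 + 4 * t = (1 + t) * (1 + t)"
    using square[of 1 1] by (simp add: d power2_eq_square mult.commute)
  ultimately have "2 * (1 + t) = 0" by (simp add: algebra_simps)
  then have "t = -1" by (simp add: add_eq_0_iff)
  then show ?thesis unfolding t_def by (auto split: if_splits)
qed

lemma permutations_in_group_with_sign_character:
  assumes G: "perm_subgroup n G" and \<chi>_id: "\<chi> id = 1"
    and \<chi>_mult: "\<And>g h. g \<in> G \<Longrightarrow> h \<in> G \<Longrightarrow> \<chi> (g \<circ> h) = \<chi> g * \<chi> h"
    and transp: "\<And>i j. i < n \<Longrightarrow> j < n \<Longrightarrow> i \<noteq> j \<Longrightarrow>
        Transposition.transpose i j \<in> G \<and> \<chi> (Transposition.transpose i j) = -1"
    and p: "p permutes {0..<n}"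
  shows "p \<in> G \<and> \<chi> p = of_int (sign p)"
  using p finite_atLeastLessThan
proof (induction rule: permutes_induct)
  case id
  then show ?case using G \<chi>_id unfolding perm_subgroup_def by (simp add: id_def)
next
  case (swap i j p)
  let ?t = "Transposition.transpose i j"
  have t: "?t \<in> G" "\<chi> ?t = -1" using transp swap by auto
  have "?t \<circ> p \<in> G" using G t swap unfolding perm_subgroup_def by blast
  moreover have "sign (?t \<circ> p) = - sign p"
    using swap permutes_imp_permutation[OF finite_atLeastLessThan]
    by (simp add: sign_compose permutation_swap_id sign_swap_id)
  moreover have "\<chi> (?t \<circ> p) = - \<chi> p" using \<chi>_mult[OF t(1), of p] t(2) swap by simp
  ultimately show ?case using swap by (simp add: comp_def)
qed

lemma gen_mat_fun_eq_det:
  assumes "G = {p. p permutes {0..<n}}" and "\<And>p. p permutes {0..<n} \<Longrightarrow> \<chi> p = of_int (sign p)"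
    and "A \<in> carrier_mat n n"
  shows "gen_mat_fun n G \<chi> A = det A"
  unfolding gen_mat_fun_def det_def using assms by (auto intro!: sum.cong)

theorem mainTheorem15:
  fixes n :: nat and G :: "(nat \<Rightarrow> nat) set" and \<chi> :: "(nat \<Rightarrow> nat) \<Rightarrow> complex"
  assumes "n \<ge> 1" and "perm_subgroup n G" and "is_character n G \<chi>"
  shows "(\<forall>A B. symmetric_mat n A \<longrightarrow> symmetric_mat n B \<longrightarrow>
            gen_mat_fun n G \<chi> (A * B) = gen_mat_fun n G \<chi> A * gen_mat_fun n G \<chi> B)
         \<longleftrightarrow> (\<forall>A\<in>carrier_mat n n. gen_mat_fun n G \<chi> A = det A)"
proof
  assume det: "\<forall>A\<in>carrier_mat n n. gen_mat_fun n G \<chi> A = det A"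
  show "\<forall>A B. symmetric_mat n A \<longrightarrow> symmetric_mat n B \<longrightarrow>
      gen_mat_fun n G \<chi> (A * B) = gen_mat_fun n G \<chi> A * gen_mat_fun n G \<chi> B"
  proof (intro allI impI)
    fix A B assume "symmetric_mat n A" "symmetric_mat n B"
    then have A: "A \<in> carrier_mat n n" and B: "B \<in> carrier_mat n n" unfolding symmetric_mat_def by simp_all
    show "gen_mat_fun n G \<chi> (A * B) = gen_mat_fun n G \<chi> A * gen_mat_fun n G \<chi> B"
      using det A B mult_carrier_mat[OF A B] det_mult[OF A B] by simp
  qed
next
  assume mult: "\<forall>A B. symmetric_mat n A \<longrightarrow> symmetric_mat n B \<longrightarrow>
      gen_mat_fun n G \<chi> (A * B) = gen_mat_fun n G \<chi> A * gen_mat_fun n G \<chi> B"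
  have "symmetric_mat n (1\<^sub>m n)" unfolding symmetric_mat_def by auto
  with mult have "gen_mat_fun n G \<chi> (1\<^sub>m n * 1\<^sub>m n) = gen_mat_fun n G \<chi> (1\<^sub>m n) * gen_mat_fun n G \<chi> (1\<^sub>m n)"
    by blast
  then have "\<chi> id * \<chi> id = \<chi> id" by (simp add: gen_mat_fun_one[OF \<open>perm_subgroup n G\<close>])
  note linear = character_linear_if_id_idempotent[OF \<open>perm_subgroup n G\<close> \<open>is_character n G \<chi>\<close> this]
  have "p \<in> G \<and> \<chi> p = of_int (sign p)" if "p permutes {0..<n}" for p
    by (rule permutations_in_group_with_sign_character[OF \<open>perm_subgroup n G\<close> linear
          transposition_in_group_if_mult_on_symmetric[OF \<open>perm_subgroup n G\<close> linear(1) mult] that])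
  moreover have "G \<subseteq> {p. p permutes {0..<n}}" using \<open>perm_subgroup n G\<close> unfolding perm_subgroup_def by simp
  ultimately show "\<forall>A\<in>carrier_mat n n. gen_mat_fun n G \<chi> A = det A"
    by (intro ballI gen_mat_fun_eq_det) auto
qed

end
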